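(* Let $p$ be an odd prime and let $n=2^\nu p^r n'$, where $\nu>0$ and $r\geq0$ are integers and $n'$ is an odd positive integer with $p\nmid n'$. Let $l$ be a positive integer. Then there exists a Hermitian self-dual negacyclic code of length $n$ over $\mathbb{F}_{p^{2l}}$ if and only if $2^{\nu+1}\nmid(p^l+1)$.
   Context: A linear code of length $n$ over $\mathbb{F}_{p^{2l}}$ is a subspace of $\mathbb{F}_{p^{2l}}^n$; it is negacyclic if $(-c_{n-1},c_0,\dots,c_{n-2})\in C$ whenever $(c_0,\dots,c_{n-1})\in C$. The Hermitian dual is $C^{\perp_H}=\{v : \sum_i v_ic_i^{p^l}=0\ \forall c\in C\}$, and $C$ is Hermitian self-dual if $C=C^{\perp_H}$. *)

theory Defs
  imports "HOL-Computational_Algebra.Primes"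
begin

definition linear_code :: "nat \<Rightarrow> 'a::field list set \<Rightarrow> bool" where
  "linear_code n C \<longleftrightarrow>
     C \<subseteq> {v. length v = n} \<and>
     replicate n 0 \<in> C \<and>
     (\<forall>u\<in>C. \<forall>v\<in>C. map2 (+) u v \<in> C) \<and>
     (\<forall>a. \<forall>v\<in>C. map (\<lambda>x. a * x) v \<in> C)"

definition negashift :: "'a::ring_1 list \<Rightarrow> 'a list" where
  "negashift c = (if c = [] then [] else (- last c) # butlast c)"

definition negacyclic_code :: "nat \<Rightarrow> 'a::field list set \<Rightarrow> bool" where
  "negacyclic_code n C \<longleftrightarrow> linear_code n C \<and> (\<forall>c\<in>C. negashift c \<in> C)"

text \<open>Hermitian form with conjugation x \<mapsto> x^q, where q = p^l and the field has q^2 elements.\<close>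
definition herm_inner :: "nat \<Rightarrow> 'a::field list \<Rightarrow> 'a list \<Rightarrow> 'a" where
  "herm_inner q v c = sum_list (map2 (\<lambda>x y. x * y ^ q) v c)"

definition herm_dual :: "nat \<Rightarrow> nat \<Rightarrow> 'a::field list set \<Rightarrow> 'a list set" where
  "herm_dual q n C = {v. length v = n \<and> (\<forall>c\<in>C. herm_inner q v c = 0)}"

definition herm_self_dual :: "nat \<Rightarrow> nat \<Rightarrow> 'a::field list set \<Rightarrow> bool" where
  "herm_self_dual q n C \<longleftrightarrow> C = herm_dual q n C"

end

(* Write q = p^l, so that x |-> x^q is the conjugation of the field.  For m with m^2 k = 1
   the map a |-> (a, m a) sends (1/m)-constacyclic words of length M to k-constacyclic words
   of length 2M, and the Hermitian form satisfies <(a, m a), (b, m' b)> = (1 + m m'^q) <a, b>.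
   If m^(q+1) = 1, the preimage of a self-dual k-constacyclic code is a self-dual
   (1/m)-constacyclic code, and conversely self-dual codes for 1/m and -1/m glue to one for k;
   if m^(q+1) = -1, all words (a, m a) already form a self-dual code.
   When 2^(nu+1) divides q + 1, halving a self-dual negacyclic code nu times keeps
   m^(q+1) = 1 and ends in a self-dual code of odd length, which cannot exist since a
   Lagrangian subspace has half the dimension.  Otherwise 2^s exactly divides q + 1 for some
   s <= nu, and s rounds of gluing, starting from the codes {(a, m a)}, give a self-dual
   negacyclic code. *)

theory Submission
  imports Defs "HOL-Computational_Algebra.Polynomial" "HOL-Number_Theory.Residues"
begin

section \<open>Finite fields\<close>

definition units_group :: "'a::field monoid" where
  "units_group = \<lparr>carrier = UNIV - {0}, monoid.mult = (*), one = 1\<rparr>"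

lemma group_units_group: "group units_group"
  by (rule groupI) (auto simp: units_group_def intro!: bexI[of _ "inverse x" for x])

lemma nat_pow_units_group: "x [^]\<^bsub>units_group\<^esub> n = (x :: 'a::field) ^ n"
  by (induction n) (simp_all add: units_group_def)

lemma power_card_UNIV_minus_one:
  fixes x :: "'a::{finite,field}"
  assumes "x \<noteq> 0"
  shows "x ^ (card (UNIV :: 'a set) - 1) = 1"
proof -
  have "x \<in> carrier units_group"
    using assms by (simp add: units_group_def)
  from group.pow_order_eq_1[OF group_units_group this] show ?thesis
    unfolding nat_pow_units_group order_def by (simp add: units_group_def card_Diff_singleton)
qed

lemma power_card_UNIV_eq_same:
  fixes x :: "'a::{finite,field}"
  shows "x ^ card (UNIV :: 'a set) = x"
proof (cases "x = 0")
  case False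
  have "x ^ card (UNIV :: 'a set) = x ^ Suc (card (UNIV :: 'a set) - 1)"
    using finite_UNIV_card_ge_0[where ?'a = 'a] by simp
  with power_card_UNIV_minus_one[OF False] show ?thesis
    by (simp only: power_Suc2) simp
qed (simp add: finite_UNIV_card_ge_0)

lemma CHAR_eq_of_card_eq_prime_power:
  assumes "prime p" and "card (UNIV :: 'a::{finite,field} set) = p ^ k"
  shows "CHAR('a) = p"
proof -
  have "prime CHAR('a)"
    by (simp add: finite_imp_CHAR_pos prime_CHAR_semidom)
  moreover have "CHAR('a) dvd p ^ k"
    using CHAR_dvd_CARD[where ?'a = 'a] assms(2) by simp
  ultimately show ?thesis
    using assms(1) prime_dvd_power_nat primes_dvd_imp_eq by blast
qed

text \<open>A non-square exists because \<open>X ^ k - 1\<close>, \<open>k = (Q - 1) div 2\<close>, has at most \<open>k\<close> roots;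
  its \<open>k\<close>-th power squares to \<open>1\<close> but is not \<open>1\<close>.\<close>
lemma ex_power_half_card_eq_minus_one:
  assumes "odd (card (UNIV :: 'a::{finite,field} set))"
  shows "\<exists>x::'a. x ^ ((card (UNIV :: 'a set) - 1) div 2) = -1"
proof -
  let ?Q = "card (UNIV :: 'a set)" and ?k = "(card (UNIV :: 'a set) - 1) div 2"
  have "card {0::'a, 1} \<le> ?Q"
    by (rule card_mono) auto
  with assms have Q: "?Q \<ge> 3"
    by (auto elim!: oddE)
  define P :: "'a poly" where "P = Polynomial.monom 1 ?k + [:-1:]"
  have degree: "degree P = ?k"
    using Q unfolding P_def by (subst degree_add_eq_left) (auto simp: degree_monom_eq)
  then have "P \<noteq> 0"
    using Q by auto
  then have "card {x. poly P x = 0} < card (UNIV - {0::'a})"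
    using card_poly_roots_bound[of P] degree Q by (simp add: card_Diff_singleton)
  then have "\<not> UNIV - {0} \<subseteq> {x. poly P x = 0}"
    using card_mono[of "{x. poly P x = 0}" "UNIV - {0}"] by auto
  then obtain x :: 'a where "x \<noteq> 0" and x: "x ^ ?k \<noteq> 1"
    by (auto simp: P_def poly_monom)
  have "x ^ ?k * x ^ ?k = x ^ (?Q - 1)"
    using assms by (simp flip: power_add) (auto elim!: oddE simp: mult_2)
  with power_card_UNIV_minus_one[OF \<open>x \<noteq> 0\<close>] have "x ^ ?k * x ^ ?k = 1"
    by simp
  with x show ?thesis
    using square_eq_1_iff by blast
qed

lemma ex_power_Suc_eq_minus_one:
  assumes "card (UNIV :: 'a::{finite,field} set) = q ^ 2" and "odd q"
  shows "\<exists>y::'a. y ^ (q + 1) = -1"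
proof -
  have "odd (card (UNIV :: 'a set))"
    using assms by simp
  then obtain x :: 'a where "x ^ ((card (UNIV :: 'a set) - 1) div 2) = -1"
    using ex_power_half_card_eq_minus_one by blast
  then have x: "x ^ ((q ^ 2 - 1) div 2) = -1"
    by (simp only: assms(1))
  have "(q ^ 2 - 1) div 2 = (q - 1) div 2 * (q + 1)"
    using \<open>odd q\<close> by (auto elim!: oddE simp: power2_eq_square)
  with x have "(x ^ ((q - 1) div 2)) ^ (q + 1) = -1"
    by (simp only: power_mult)
  then show ?thesis ..
qed

section \<open>Words, linear codes and constacyclic shifts\<close>

definition vadd :: "'a::plus list \<Rightarrow> 'a list \<Rightarrow> 'a list" where
  "vadd x y = map2 (+) x y"

definition vsmult :: "'a::times \<Rightarrow> 'a list \<Rightarrow> 'a list" where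
  "vsmult a x = map ((*) a) x"

lemma length_vadd [simp]: "length (vadd x y) = min (length x) (length y)"
  by (simp add: vadd_def)

lemma length_vsmult [simp]: "length (vsmult a x) = length x"
  by (simp add: vsmult_def)

lemma nth_vadd [simp]: "i < length x \<Longrightarrow> i < length y \<Longrightarrow> vadd x y ! i = x ! i + y ! i"
  by (simp add: vadd_def)

lemma nth_vsmult [simp]: "i < length x \<Longrightarrow> vsmult a x ! i = a * x ! i"
  by (simp add: vsmult_def)

lemma vadd_append: "length x = length z \<Longrightarrow> vadd (x @ y) (z @ w) = vadd x z @ vadd y w"
  by (simp add: vadd_def)

lemma vsmult_append: "vsmult a (x @ y) = vsmult a x @ vsmult a y"
  by (simp add: vsmult_def)

lemma linear_code_iff:
  "linear_code N C \<longleftrightarrow> C \<subseteq> {x. length x = N} \<and> replicate N 0 \<in> C \<and>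
     (\<forall>x\<in>C. \<forall>y\<in>C. vadd x y \<in> C) \<and> (\<forall>a. \<forall>x\<in>C. vsmult a x \<in> C)"
  by (simp add: linear_code_def vadd_def vsmult_def)

lemma linear_code_length: "linear_code N C \<Longrightarrow> x \<in> C \<Longrightarrow> length x = N"
  by (auto simp: linear_code_iff)

lemma linear_code_zero: "linear_code N C \<Longrightarrow> replicate N 0 \<in> C"
  by (simp add: linear_code_iff)

lemma linear_code_vadd: "linear_code N C \<Longrightarrow> x \<in> C \<Longrightarrow> y \<in> C \<Longrightarrow> vadd x y \<in> C"
  by (simp add: linear_code_iff)

lemma linear_code_vsmult: "linear_code N C \<Longrightarrow> x \<in> C \<Longrightarrow> vsmult a x \<in> C"
  by (simp add: linear_code_iff)

lemma card_linear_code_pos: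
  fixes C :: "'a::field list set"
  assumes "finite (UNIV :: 'a set)" and "linear_code N C"
  shows "card C > 0"
proof -
  have "C \<subseteq> {xs. length xs = N}"
    using assms(2) by (auto simp: linear_code_iff)
  moreover have "finite {xs :: 'a list. length xs = N}"
    using finite_lists_length_eq[OF assms(1), of N] by simp
  ultimately have "finite C"
    by (rule finite_subset)
  moreover have "C \<noteq> {}"
    using linear_code_zero[OF assms(2)] by blast
  ultimately show ?thesis
    by (simp add: card_gt_0_iff)
qed

definition constashift :: "'a::times \<Rightarrow> 'a list \<Rightarrow> 'a list" where
  "constashift \<kappa> c = (if c = [] then [] else (\<kappa> * last c) # butlast c)"

lemma negashift_eq_constashift: "negashift c = constashift (-1) c"
  by (simp add: negashift_def constashift_def)

lemma length_constashift [simp]: "length (constashift \<kappa> c) = length c"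
  by (simp add: constashift_def)

lemma nth_constashift:
  "i < length c \<Longrightarrow> constashift \<kappa> c ! i = (if i = 0 then \<kappa> * c ! (length c - 1) else c ! (i - 1))"
  by (cases c rule: rev_cases) (auto simp: constashift_def nth_append nth_Cons')

lemma constashift_vadd:
  "length x = length y \<Longrightarrow> constashift \<kappa> (vadd x y) = vadd (constashift \<kappa> x) (constashift \<kappa> y)"
  for \<kappa> :: "'a::semiring"
  by (rule nth_equalityI) (auto simp: nth_constashift algebra_simps)

lemma funpow_constashift_append:
  "j \<le> length y \<Longrightarrow>
   (constashift \<kappa> ^^ j) (x @ y) = vsmult \<kappa> (drop (length y - j) y) @ x @ take (length y - j) y"
proof (induction j)
  case 0
  then show ?case
    by (simp add: vsmult_def)
next
  case (Suc j)
  define k where "k = length y - Suc j"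
  have k: "length y - j = Suc k" and "k < length y"
    using Suc.prems by (auto simp: k_def)
  then have "take (Suc k) y = take k y @ [y ! k]" and "drop k y = y ! k # drop (Suc k) y"
    by (simp_all add: take_Suc_conv_app_nth Cons_nth_drop_Suc)
  with Suc show ?case
    by (simp add: k k_def[symmetric] constashift_def vsmult_def butlast_append)
qed

lemma funpow_mem: "(\<And>c. c \<in> C \<Longrightarrow> f c \<in> C) \<Longrightarrow> c \<in> C \<Longrightarrow> (f ^^ j) c \<in> C"
  by (induction j) auto

definition stack :: "'a::times \<Rightarrow> 'a list \<Rightarrow> 'a list" where
  "stack m a = a @ vsmult m a"

lemma length_stack [simp]: "length (stack m a) = 2 * length a"
  by (simp add: stack_def)

lemma stack_vadd: "length a = length b \<Longrightarrow> stack m (vadd a b) = vadd (stack m a) (stack m b)"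
  for m :: "'a::semiring"
  unfolding stack_def by (simp add: vadd_append) (rule nth_equalityI; simp add: algebra_simps)

lemma stack_vsmult: "stack m (vsmult c a) = vsmult c (stack m a)"
  for m :: "'a::comm_semiring"
  unfolding stack_def by (simp add: vsmult_append) (rule nth_equalityI; simp add: algebra_simps)

lemma stack_zero: "stack m (replicate M 0) = replicate (2 * M) 0"
  for m :: "'a::mult_zero"
  unfolding stack_def by (rule nth_equalityI) (auto simp: nth_append)

lemma constashift_stack:
  fixes m :: "'a::field"
  assumes "m ^ 2 * \<kappa> = 1"
  shows "constashift \<kappa> (stack m a) = stack m (constashift (inverse m) a)"
proof (cases a rule: rev_cases)
  case (snoc ys y)
  have "m \<noteq> 0"
    using assms by auto
  moreover have "\<kappa> * m = inverse m"
    using assms \<open>m \<noteq> 0\<close> by (simp add: field_simps power2_eq_square)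
  ultimately show ?thesis
    unfolding snoc stack_def constashift_def
    by (simp add: vsmult_def mult.assoc[symmetric] butlast_append)
qed (simp add: stack_def constashift_def vsmult_def)

text \<open>Shifting \<open>M\<close> times turns \<open>(x, y)\<close> into \<open>(\<kappa> y, x)\<close>; adding \<open>m\<close> times this word
  to \<open>(x, y)\<close> gives a word of the form \<open>(a, m a)\<close>.\<close>
lemma stack_projection_mem:
  fixes m :: "'a::field"
  assumes C: "linear_code (2 * M) C" "\<And>c. c \<in> C \<Longrightarrow> constashift \<kappa> c \<in> C"
    and xy: "x @ y \<in> C" "length x = M" "length y = M" and mk: "m ^ 2 * \<kappa> = 1"
  shows "stack m (vadd x (vsmult (m * \<kappa>) y)) \<in> C"
proof -
  have "(constashift \<kappa> ^^ M) (x @ y) \<in> C"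
    using C(2) xy(1) by (rule funpow_mem)
  then have "vsmult \<kappa> y @ x \<in> C"
    using funpow_constashift_append[of M y \<kappa> x] xy by simp
  then have "vadd (x @ y) (vsmult m (vsmult \<kappa> y @ x)) \<in> C"
    using C(1) xy(1) by (simp add: linear_code_vadd linear_code_vsmult)
  also have "vadd (x @ y) (vsmult m (vsmult \<kappa> y @ x)) = stack m (vadd x (vsmult (m * \<kappa>) y))"
    unfolding stack_def using xy mk
    by (simp add: vadd_append vsmult_append)
       (intro conjI; rule nth_equalityI; simp add: algebra_simps power2_eq_square)
  finally show ?thesis .
qed

definition glue :: "'a::ring \<Rightarrow> 'a list set \<Rightarrow> 'a list set \<Rightarrow> 'a list set" where
  "glue m D1 D2 = {vadd (stack m a) (stack (- m) b) | a b. a \<in> D1 \<and> b \<in> D2}"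

lemma vadd_stack_pair:
  fixes m k :: "'a::comm_ring"
  assumes "length a = M" "length b = M" "length a' = M" "length b' = M"
  shows "vadd (vadd (stack m a) (stack k b)) (vadd (stack m a') (stack k b')) =
    vadd (stack m (vadd a a')) (stack k (vadd b b'))"
  using assms by (intro nth_equalityI) (auto simp: stack_def nth_append algebra_simps)

lemma vsmult_stack_pair:
  fixes m k :: "'a::comm_ring"
  assumes "length a = length b"
  shows "vsmult c (vadd (stack m a) (stack k b)) =
    vadd (stack m (vsmult c a)) (stack k (vsmult c b))"
  using assms by (intro nth_equalityI) (auto simp: stack_def nth_append algebra_simps)

lemma linear_code_glue:
  fixes m :: "'a::field"
  assumes lin: "linear_code M D1" "linear_code M D2"
  shows "linear_code (2 * M) (glue m D1 D2)"
  unfolding linear_code_iff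
proof (intro conjI ballI allI)
  have len: "\<And>a. a \<in> D1 \<Longrightarrow> length a = M" "\<And>b. b \<in> D2 \<Longrightarrow> length b = M"
    using lin linear_code_length by blast+
  then show "glue m D1 D2 \<subseteq> {x. length x = 2 * M}"
    by (auto simp: glue_def)
  have "vadd (stack m (replicate M 0)) (stack (- m) (replicate M 0)) = replicate (2 * M) 0"
    by (simp add: stack_zero) (rule nth_equalityI; simp)
  with lin show "replicate (2 * M) 0 \<in> glue m D1 D2"
    unfolding glue_def by (metis (mono_tags, lifting) linear_code_zero mem_Collect_eq)
  show "vadd x y \<in> glue m D1 D2" if xy: "x \<in> glue m D1 D2" "y \<in> glue m D1 D2" for x y
  proof -
    obtain a b a' b' where "a \<in> D1" "b \<in> D2" "a' \<in> D1" "b' \<in> D2"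
      and "x = vadd (stack m a) (stack (- m) b)" "y = vadd (stack m a') (stack (- m) b')"
      using xy unfolding glue_def by blast
    with lin len show ?thesis
      unfolding glue_def by (auto simp: vadd_stack_pair intro!: linear_code_vadd)
  qed
  show "vsmult c x \<in> glue m D1 D2" if "x \<in> glue m D1 D2" for c x
    using that lin len unfolding glue_def
    by (clarsimp simp: vsmult_stack_pair) (blast intro: linear_code_vsmult)
qed

lemma constashift_glue:
  fixes m :: "'a::field"
  assumes mk: "m ^ 2 * \<kappa> = 1" and lin: "linear_code M D1" "linear_code M D2"
    and D1: "\<And>a. a \<in> D1 \<Longrightarrow> constashift (inverse m) a \<in> D1"
    and D2: "\<And>b. b \<in> D2 \<Longrightarrow> constashift (- inverse m) b \<in> D2"
    and "c \<in> glue m D1 D2"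
  shows "constashift \<kappa> c \<in> glue m D1 D2"
proof -
  obtain a b where "a \<in> D1" "b \<in> D2" and c: "c = vadd (stack m a) (stack (- m) b)"
    using \<open>c \<in> glue m D1 D2\<close> unfolding glue_def by blast
  then have "constashift \<kappa> c =
      vadd (stack m (constashift (inverse m) a)) (stack (- m) (constashift (- inverse m) b))"
    using lin by (simp add: linear_code_length constashift_vadd constashift_stack mk)
  with \<open>a \<in> D1\<close> \<open>b \<in> D2\<close> D1 D2 show ?thesis
    unfolding glue_def by blast
qed

lemma stack_pair_decomposition:
  fixes m :: "'a::field"
  assumes "m \<noteq> 0" and "(2::'a) \<noteq> 0" and "length v = 2 * M"
  obtains a b where "length a = M" "length b = M" "v = vadd (stack m a) (stack (- m) b)"
proof -
  define x y where "x = take M v" and "y = drop M v"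
  have v: "v = x @ y" and lx: "length x = M" and ly: "length y = M"
    using assms(3) by (auto simp: x_def y_def)
  define a where "a = vsmult (inverse 2) (vadd x (vsmult (inverse m) y))"
  define b where "b = vsmult (inverse 2) (vadd x (vsmult (- inverse m) y))"
  have "(2::'a) * 2 \<noteq> 0"
    using assms(2) no_zero_divisors by blast
  then have "v = vadd (stack m a) (stack (- m) b)"
    unfolding v stack_def a_def b_def using lx ly assms(1,2)
    by (simp add: vadd_append) (intro conjI; rule nth_equalityI; simp add: field_simps)
  moreover have "length a = M" "length b = M"
    using lx ly by (simp_all add: a_def b_def)
  ultimately show ?thesis
    using that by blast
qed

section \<open>Hermitian forms and self-dual codes\<close>

locale conj_field =
  fixes q :: nat and field_type :: "'a::field itself"
  assumes power_q_add: "(a + b :: 'a) ^ q = a ^ q + b ^ q"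
    and power_q_power_q: "(a ^ q :: 'a) ^ q = a"
    and two_neq_zero: "(2::'a) \<noteq> 0"
begin

lemma q_gt_0: "q > 0"
proof (rule ccontr)
  assume "\<not> q > 0"
  with power_q_power_q[of 0] show False
    by simp
qed

lemma power_q_minus: "(- a :: 'a) ^ q = - (a ^ q)"
  using power_q_add[of a "- a"] q_gt_0 by (simp add: power_0_left eq_neg_iff_add_eq_0 add.commute)

lemma power_q_sum: "(\<Sum>i\<in>A. f i :: 'a) ^ q = (\<Sum>i\<in>A. f i ^ q)"
  by (induction A rule: infinite_finite_induct) (simp_all add: power_q_add q_gt_0)

lemma power_q_eq_inverse: "(m::'a) ^ (q + 1) = 1 \<Longrightarrow> m ^ q = inverse m"
  by (metis inverse_unique mult.commute power_Suc Suc_eq_plus1)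

abbreviation hinner :: "'a list \<Rightarrow> 'a list \<Rightarrow> 'a" where
  "hinner \<equiv> herm_inner q"

lemma herm_inner_conv_sum:
  "length x = length y \<Longrightarrow> hinner x y = (\<Sum>i<length x. x ! i * (y ! i) ^ q)"
  by (simp add: herm_inner_def sum_list_sum_nth atLeast0LessThan)

lemma herm_inner_append:
  "length a = length c \<Longrightarrow> hinner (a @ b) (c @ d) = hinner a c + hinner b d"
  by (simp add: herm_inner_def)

lemma herm_inner_vadd_left:
  "length x = length z \<Longrightarrow> length y = length z \<Longrightarrow> hinner (vadd x y) z = hinner x z + hinner y z"
  by (simp add: herm_inner_conv_sum sum.distrib distrib_right)

lemma herm_inner_vadd_right:
  "length x = length y \<Longrightarrow> length x = length z \<Longrightarrow> hinner x (vadd y z) = hinner x y + hinner x z"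
  by (simp add: herm_inner_conv_sum sum.distrib distrib_left power_q_add)

lemma herm_inner_vsmult_left: "length x = length z \<Longrightarrow> hinner (vsmult a x) z = a * hinner x z"
  by (simp add: herm_inner_conv_sum sum_distrib_left mult.assoc)

lemma herm_inner_vsmult_right: "length x = length z \<Longrightarrow> hinner x (vsmult a z) = a ^ q * hinner x z"
  by (simp add: herm_inner_conv_sum sum_distrib_left power_mult_distrib mult_ac)

lemma herm_inner_commute: "length x = length y \<Longrightarrow> hinner y x = (hinner x y) ^ q"
  by (simp add: herm_inner_conv_sum power_q_sum power_mult_distrib power_q_power_q mult.commute)

lemma herm_inner_zero_left [simp]: "length y = N \<Longrightarrow> hinner (replicate N 0) y = 0"
  by (simp add: herm_inner_conv_sum)

lemma herm_inner_zero_right [simp]: "length x = N \<Longrightarrow> hinner x (replicate N 0) = 0"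
  by (simp add: herm_inner_conv_sum zero_power q_gt_0)

lemma herm_inner_nondegenerate:
  fixes x :: "'a list"
  assumes "length x = N" and "\<And>b. length b = N \<Longrightarrow> hinner x b = 0"
  shows "x = replicate N 0"
proof (rule nth_equalityI)
  fix i
  assume "i < length x"
  define b where "b = map (\<lambda>j. if j = i then 1 else 0 :: 'a) [0..<N]"
  have "hinner x b = (\<Sum>j<N. x ! j * (if j = i then 1 else 0))"
    using assms(1) by (auto simp: herm_inner_conv_sum b_def zero_power q_gt_0 intro!: sum.cong)
  also have "\<dots> = x ! i"
    using assms(1) \<open>i < length x\<close> by (simp add: if_distrib cong: if_cong)
  finally show "x ! i = replicate N 0 ! i"
    using assms \<open>i < length x\<close> by (simp add: b_def)
qed (simp add: assms(1))

lemma herm_inner_lincomb_left: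
  assumes "length x = length w" "length u = length w" "length v = length w"
  shows "hinner (vadd (vadd x (vsmult a u)) (vsmult b v)) w =
    hinner x w + a * hinner u w + b * hinner v w"
  using assms by (simp add: herm_inner_vadd_left herm_inner_vsmult_left)

lemma herm_inner_lincomb_right:
  assumes "length x = length w" "length u = length w" "length v = length w"
  shows "hinner w (vadd (vadd x (vsmult a u)) (vsmult b v)) =
    hinner w x + a ^ q * hinner w u + b ^ q * hinner w v"
  using assms by (simp add: herm_inner_vadd_right herm_inner_vsmult_right)

definition orth :: "'a list set \<Rightarrow> 'a list set \<Rightarrow> 'a list set" where
  "orth V S = {x \<in> V. \<forall>y\<in>S. hinner x y = 0}"

lemma linear_code_orth:
  assumes "linear_code N V" and "S \<subseteq> {y. length y = N}"
  shows "linear_code N (orth V S)"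
  using assms unfolding linear_code_iff orth_def
  by (auto simp: herm_inner_vadd_left herm_inner_vsmult_left subset_iff)

lemma hyperbolic_decomposition:
  assumes V: "linear_code N V" and "u \<in> V" "v \<in> V"
    and uu: "hinner u u = 0" and uv: "hinner u v = 1"
  shows "bij_betw (\<lambda>(x, a, b). vadd (vadd x (vsmult a u)) (vsmult b v))
    (orth V {u, v} \<times> UNIV \<times> UNIV) V"
proof -
  have len: "\<And>x. x \<in> V \<Longrightarrow> length x = N"
    using V linear_code_length by blast
  have lu: "length u = N" and lv: "length v = N"
    using len \<open>u \<in> V\<close> \<open>v \<in> V\<close> by auto
  have vu: "hinner v u = 1"
    using herm_inner_commute[of u v] lu lv uv by simp
  define f where "f = (\<lambda>(x, a, b). vadd (vadd x (vsmult a u)) (vsmult b v))"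
  define g where "g z = (let b = hinner z u; a = hinner z v - b * hinner v v
                         in (vadd (vadd z (vsmult (- a) u)) (vsmult (- b) v), a, b))" for z
  have f_mem: "f (x, a, b) \<in> V" if "x \<in> V" for x a b
    using V that \<open>u \<in> V\<close> \<open>v \<in> V\<close> by (simp add: f_def linear_code_vadd linear_code_vsmult)
  show ?thesis
    unfolding f_def[symmetric]
  proof (rule bij_betw_byWitness[where f' = g])
    show "\<forall>t\<in>orth V {u, v} \<times> UNIV \<times> UNIV. g (f t) = t"
    proof (clarsimp simp: orth_def)
      fix x a b
      assume "x \<in> V" "hinner x u = 0" "hinner x v = 0"
      moreover have "length x = N"
        using len \<open>x \<in> V\<close> by blast
      ultimately show "g (f (x, a, b)) = (x, a, b)"
        using lu lv
        by (simp add: g_def f_def Let_def herm_inner_lincomb_left uu uv vu)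
           (rule nth_equalityI; simp add: algebra_simps)
    qed
    show "\<forall>z\<in>V. f (g z) = z"
      using len lu lv by (auto simp: f_def g_def Let_def algebra_simps intro!: nth_equalityI)
    show "f ` (orth V {u, v} \<times> UNIV \<times> UNIV) \<subseteq> V"
      using f_mem by (auto simp: orth_def)
    show "g ` V \<subseteq> orth V {u, v} \<times> UNIV \<times> UNIV"
    proof (rule image_subsetI)
      fix z
      assume "z \<in> V"
      then have "length z = N" and "fst (g z) \<in> V"
        using len f_mem[of z] by (auto simp: g_def f_def Let_def)
      then show "g z \<in> orth V {u, v} \<times> UNIV \<times> UNIV"
        using lu lv by (auto simp: orth_def g_def Let_def herm_inner_lincomb_left uu uv vu)
    qed
  qed
qed

lemma orth_hyperbolic_nondegenerate:
  assumes V: "linear_code N V" and "u \<in> V" "v \<in> V" and "hinner u u = 0" "hinner u v = 1"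
    and nondeg: "orth V V \<subseteq> {replicate N 0}"
  shows "orth (orth V {u, v}) (orth V {u, v}) \<subseteq> {replicate N 0}"
proof
  fix x
  assume x: "x \<in> orth (orth V {u, v}) (orth V {u, v})"
  then have "x \<in> V" and xu: "hinner x u = 0" and xv: "hinner x v = 0"
    by (auto simp: orth_def)
  have len: "\<And>y. y \<in> V \<Longrightarrow> length y = N"
    using V linear_code_length by blast
  have "hinner x z = 0" if "z \<in> V" for z
  proof -
    obtain y a b where y: "y \<in> orth V {u, v}" and z: "z = vadd (vadd y (vsmult a u)) (vsmult b v)"
      using hyperbolic_decomposition[OF assms(1-5)] \<open>z \<in> V\<close> by (force simp: bij_betw_def)
    have "hinner x y = 0"
      using x y by (simp add: orth_def)
    moreover have "y \<in> V"
      using y by (simp add: orth_def)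
    ultimately show ?thesis
      unfolding z using len \<open>x \<in> V\<close> \<open>u \<in> V\<close> \<open>v \<in> V\<close>
      by (simp add: herm_inner_lincomb_right xu xv)
  qed
  then have "x \<in> orth V V"
    using \<open>x \<in> V\<close> by (simp add: orth_def)
  with nondeg show "x \<in> {replicate N 0}"
    by blast
qed

lemma orth_hyperbolic_lagrangian:
  assumes V: "linear_code N V" and "v \<in> V" and U: "linear_code N U" and lagr: "orth V U = U"
    and "u \<in> U" and uv: "hinner u v = 1"
  shows "orth (orth V {u, v}) (orth U {v}) = orth U {v}"
proof
  have isotropic: "\<And>x y. x \<in> U \<Longrightarrow> y \<in> U \<Longrightarrow> hinner x y = 0" and "U \<subseteq> V"
    using lagr by (auto simp: orth_def)
  then show "orth U {v} \<subseteq> orth (orth V {u, v}) (orth U {v})"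
    using \<open>u \<in> U\<close> by (auto simp: orth_def)
  show "orth (orth V {u, v}) (orth U {v}) \<subseteq> orth U {v}"
  proof
    fix x
    assume x: "x \<in> orth (orth V {u, v}) (orth U {v})"
    then have "x \<in> V" and xu: "hinner x u = 0" and xv: "hinner x v = 0"
      by (auto simp: orth_def)
    have "hinner x y = 0" if "y \<in> U" for y
    proof -
      define y' where "y' = vadd y (vsmult (- hinner y v) u)"
      have len: "length x = N" "length y = N" "length u = N" "length v = N"
        using V U \<open>x \<in> V\<close> \<open>y \<in> U\<close> \<open>u \<in> U\<close> \<open>v \<in> V\<close> by (auto simp: linear_code_length)
      have "y' \<in> U"
        using U \<open>y \<in> U\<close> \<open>u \<in> U\<close> by (simp add: y'_def linear_code_vadd linear_code_vsmult)
      moreover have "hinner y' v = 0"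
        using len by (simp add: y'_def herm_inner_vadd_left herm_inner_vsmult_left uv)
      ultimately have "hinner x y' = 0"
        using x by (simp add: orth_def)
      then show ?thesis
        using len by (simp add: y'_def herm_inner_vadd_right herm_inner_vsmult_right xu)
    qed
    then have "x \<in> orth V U"
      using \<open>x \<in> V\<close> by (simp add: orth_def)
    with lagr xv show "x \<in> orth U {v}"
      by (simp add: orth_def)
  qed
qed

lemma ex_hyperbolic_partner:
  assumes V: "linear_code N V" and nondeg: "orth V V \<subseteq> {replicate N 0}"
    and "u \<in> V" and "u \<noteq> replicate N 0"
  obtains v where "v \<in> V" and "hinner u v = 1"
proof -
  obtain w where "w \<in> V" and uw: "hinner u w \<noteq> 0"
    using assms(3,4) nondeg by (auto simp: orth_def)
  define v where "v = vsmult (inverse (hinner u w ^ q)) w"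
  have "v \<in> V"
    using V \<open>w \<in> V\<close> by (simp add: v_def linear_code_vsmult)
  moreover have "hinner u v = 1"
    using linear_code_length[OF V] \<open>u \<in> V\<close> \<open>w \<in> V\<close> uw
    by (simp add: v_def herm_inner_vsmult_right power_inverse power_q_power_q)
  ultimately show ?thesis
    using that by blast
qed

lemma card_hyperbolic_decomposition:
  assumes "linear_code N V" and "u \<in> V" "v \<in> V" and "hinner u u = 0" "hinner u v = 1"
  shows "card V = card (orth V {u, v}) * (card (UNIV :: 'a set) * card (UNIV :: 'a set))"
  using bij_betw_same_card[OF hyperbolic_decomposition[OF assms]]
  by (simp add: card_cartesian_product del: UNIV_Times_UNIV)

text \<open>Peeling off hyperbolic planes through a Lagrangian subspace \<open>U\<close> of the nondegenerate
  space \<open>V\<close> shows that \<open>V\<close> has even dimension.\<close>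
lemma card_eq_power_if_lagrangian:
  assumes fin: "finite (UNIV :: 'a set)"
  shows "linear_code N V \<Longrightarrow> orth V V \<subseteq> {replicate N 0} \<Longrightarrow> linear_code N U \<Longrightarrow> orth V U = U \<Longrightarrow>
    \<exists>t. card V = card (UNIV :: 'a set) ^ (2 * t)"
proof (induction "card V" arbitrary: V U rule: less_induct)
  case (less V U)
  let ?Q = "card (UNIV :: 'a set)"
  have len: "\<And>x. x \<in> V \<Longrightarrow> length x = N"
    using less.prems(1) linear_code_length by blast
  show ?case
  proof (cases "U \<subseteq> {replicate N 0}")
    case True
    then have "orth V U = V"
      using len by (auto simp: orth_def)
    with True less.prems(1,4) have "V = {replicate N 0}"
      using linear_code_zero by blast
    then show ?thesis
      by (intro exI[of _ 0]) simp
  next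
    case False
    then obtain u where "u \<in> U" and "u \<noteq> replicate N 0"
      by auto
    then have "u \<in> V" and uu: "hinner u u = 0"
      using less.prems(4) by (auto simp: orth_def)
    then obtain v where "v \<in> V" and uv: "hinner u v = 1"
      using ex_hyperbolic_partner less.prems(1,2) \<open>u \<noteq> replicate N 0\<close> by blast
    define W where "W = orth V {u, v}"
    have card_V: "card V = card W * (?Q * ?Q)"
      unfolding W_def by (rule card_hyperbolic_decomposition) fact+
    have W: "linear_code N W"
      using linear_code_orth[OF less.prems(1)] len \<open>u \<in> V\<close> \<open>v \<in> V\<close> by (simp add: W_def)
    have "?Q * ?Q > 1"
      using card_mono[OF fin, of "{0, 1}"] by (simp add: one_less_mult)
    with card_V have "card W < card V"
      using card_linear_code_pos[OF fin W] by (simp add: n_less_n_mult_m)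
    moreover have "orth W W \<subseteq> {replicate N 0}"
      unfolding W_def
      using orth_hyperbolic_nondegenerate[OF less.prems(1) \<open>u \<in> V\<close> \<open>v \<in> V\<close> uu uv less.prems(2)] .
    moreover have "linear_code N (orth U {v})"
      using linear_code_orth[OF less.prems(3)] len \<open>v \<in> V\<close> by simp
    moreover have "orth W (orth U {v}) = orth U {v}"
      unfolding W_def
      using orth_hyperbolic_lagrangian[OF less.prems(1) \<open>v \<in> V\<close> less.prems(3,4) \<open>u \<in> U\<close> uv] .
    ultimately obtain t where "card W = ?Q ^ (2 * t)"
      using less.hyps W by blast
    with card_V have "card V = ?Q ^ (2 * Suc t)"
      by (simp add: power_add power2_eq_square mult_ac)
    then show ?thesis ..
  qed
qed

lemma herm_self_dual_length_even:
  fixes C :: "'a list set"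
  assumes fin: "finite (UNIV :: 'a set)" and C: "linear_code N C" "herm_self_dual q N C"
  shows "even N"
proof -
  let ?V = "{x :: 'a list. length x = N}" and ?Q = "card (UNIV :: 'a set)"
  have "linear_code N ?V"
    by (auto simp: linear_code_iff)
  moreover have "orth ?V ?V \<subseteq> {replicate N 0}"
    using herm_inner_nondegenerate by (auto simp: orth_def)
  moreover have "orth ?V C = C"
    using C(2) by (simp add: herm_self_dual_def herm_dual_def orth_def)
  ultimately obtain t where "card ?V = ?Q ^ (2 * t)"
    using card_eq_power_if_lagrangian[OF fin] C(1) by blast
  moreover have "card ?V = ?Q ^ N"
    using card_lists_length_eq[OF fin, of N] by simp
  moreover have "?Q > 1"
    using card_mono[OF fin, of "{0, 1}"] by simp
  ultimately have "N = 2 * t"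
    using power_inject_exp by metis
  then show ?thesis
    by simp
qed

section \<open>Hermitian self-dual constacyclic codes\<close>

definition herm_sd_constacyclic :: "nat \<Rightarrow> 'a \<Rightarrow> 'a list set \<Rightarrow> bool" where
  "herm_sd_constacyclic N \<kappa> C \<longleftrightarrow>
     linear_code N C \<and> (\<forall>c\<in>C. constashift \<kappa> c \<in> C) \<and> herm_self_dual q N C"

lemma herm_sd_constacyclicI:
  assumes "linear_code N C" and "\<And>c. c \<in> C \<Longrightarrow> constashift \<kappa> c \<in> C"
    and "\<And>x y. x \<in> C \<Longrightarrow> y \<in> C \<Longrightarrow> hinner x y = 0"
    and "\<And>v. length v = N \<Longrightarrow> (\<And>c. c \<in> C \<Longrightarrow> hinner v c = 0) \<Longrightarrow> v \<in> C"
  shows "herm_sd_constacyclic N \<kappa> C"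
  using assms linear_code_length[OF assms(1)]
  unfolding herm_sd_constacyclic_def herm_self_dual_def herm_dual_def by blast

lemma herm_sd_constacyclic_linear_code: "herm_sd_constacyclic N \<kappa> C \<Longrightarrow> linear_code N C"
  by (simp add: herm_sd_constacyclic_def)

lemma herm_sd_constacyclic_shift: "herm_sd_constacyclic N \<kappa> C \<Longrightarrow> c \<in> C \<Longrightarrow> constashift \<kappa> c \<in> C"
  by (simp add: herm_sd_constacyclic_def)

lemma herm_sd_constacyclic_orthogonal:
  "herm_sd_constacyclic N \<kappa> C \<Longrightarrow> x \<in> C \<Longrightarrow> y \<in> C \<Longrightarrow> hinner x y = 0"
  unfolding herm_sd_constacyclic_def herm_self_dual_def herm_dual_def by blast

lemma herm_sd_constacyclic_maximal:
  "herm_sd_constacyclic N \<kappa> C \<Longrightarrow> length v = N \<Longrightarrow> (\<And>c. c \<in> C \<Longrightarrow> hinner v c = 0) \<Longrightarrow> v \<in> C"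
  unfolding herm_sd_constacyclic_def herm_self_dual_def herm_dual_def by blast

lemma herm_inner_stack:
  "length a = length b \<Longrightarrow> hinner (stack m a) (stack k b) = (1 + m * k ^ q) * hinner a b"
  unfolding stack_def
  by (simp add: herm_inner_append herm_inner_vsmult_left herm_inner_vsmult_right algebra_simps)

lemma herm_inner_append_stack:
  "length x = length b \<Longrightarrow> length y = length b \<Longrightarrow>
    hinner (x @ y) (stack m b) = hinner x b + m ^ q * hinner y b"
  unfolding stack_def by (simp add: herm_inner_append herm_inner_vsmult_right)

lemma herm_inner_stack_append:
  "length x = length a \<Longrightarrow> length y = length a \<Longrightarrow>
    hinner (stack m a) (x @ y) = hinner a x + m * hinner a y"
  unfolding stack_def by (simp add: herm_inner_append herm_inner_vsmult_left)

lemma herm_inner_stack_pair: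
  assumes "m ^ (q + 1) = 1" and "length a = M" "length b = M" "length a' = M" "length b' = M"
  shows "hinner (vadd (stack m a) (stack (- m) b)) (vadd (stack m a') (stack (- m) b')) =
    2 * (hinner a a' + hinner b b')"
proof -
  have "m * m ^ q = 1"
    using assms(1) by (simp add: power_Suc[symmetric] del: power_Suc)
  then show ?thesis
    using assms(2-)
    by (simp add: herm_inner_vadd_left herm_inner_vadd_right herm_inner_stack power_q_minus
        algebra_simps)
qed

lemma herm_sd_constacyclic_stack_mem:
  assumes C: "herm_sd_constacyclic (2 * M) \<kappa> C" and mk: "m ^ 2 * \<kappa> = 1" and mq: "m ^ (q + 1) = 1"
    and "length v = M" and v_perp: "\<And>a. length a = M \<Longrightarrow> stack m a \<in> C \<Longrightarrow> hinner v a = 0"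
  shows "stack m v \<in> C"
proof (rule herm_sd_constacyclic_maximal[OF C])
  have lin: "linear_code (2 * M) C"
    using C by (rule herm_sd_constacyclic_linear_code)
  have "m \<noteq> 0"
    using mk by auto
  with mk have "m * \<kappa> = inverse m"
    by (simp add: field_simps power2_eq_square)
  then have mk_q: "(m * \<kappa>) ^ q = m"
    using power_q_eq_inverse[OF mq] by (simp add: power_inverse)
  fix c
  assume "c \<in> C"
  define x y where "x = take M c" and "y = drop M c"
  have c: "c = x @ y" and len: "length x = M" "length y = M"
    using linear_code_length[OF lin \<open>c \<in> C\<close>] by (auto simp: x_def y_def)
  have "stack m (vadd x (vsmult (m * \<kappa>) y)) \<in> C"
    using stack_projection_mem[OF lin herm_sd_constacyclic_shift[OF C]] \<open>c \<in> C\<close> c len mk by simp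
  then have "hinner v (vadd x (vsmult (m * \<kappa>) y)) = 0"
    using len by (intro v_perp) simp_all
  then show "hinner (stack m v) c = 0"
    using \<open>length v = M\<close> len mk_q
    by (simp add: c herm_inner_stack_append herm_inner_vsmult_right herm_inner_vadd_right)
qed (simp add: \<open>length v = M\<close>)

lemma herm_sd_constacyclic_halve:
  assumes C: "herm_sd_constacyclic (2 * M) \<kappa> C" and mk: "m ^ 2 * \<kappa> = 1" and mq: "m ^ (q + 1) = 1"
  shows "herm_sd_constacyclic M (inverse m) {a. length a = M \<and> stack m a \<in> C}"
proof (rule herm_sd_constacyclicI)
  let ?D = "{a. length a = M \<and> stack m a \<in> C}"
  show "linear_code M ?D"
    using herm_sd_constacyclic_linear_code[OF C]
    by (auto simp: linear_code_iff stack_zero stack_vadd stack_vsmult)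
  show "constashift (inverse m) a \<in> ?D" if "a \<in> ?D" for a
    using that herm_sd_constacyclic_shift[OF C] by (auto simp flip: constashift_stack[OF mk])
  show "hinner x y = 0" if "x \<in> ?D" "y \<in> ?D" for x y
  proof -
    have "hinner (stack m x) (stack m y) = 2 * hinner x y"
      using that mq by (simp add: herm_inner_stack power_Suc[symmetric] del: power_Suc)
    with that herm_sd_constacyclic_orthogonal[OF C] show ?thesis
      using two_neq_zero by auto
  qed
  show "v \<in> ?D" if "length v = M" and "\<And>a. a \<in> ?D \<Longrightarrow> hinner v a = 0" for v
    using herm_sd_constacyclic_stack_mem[OF C mk mq, of v] that by auto
qed

lemma herm_sd_constacyclic_stack_all:
  assumes mk: "m ^ 2 * \<kappa> = 1" and mq: "m ^ (q + 1) = -1"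
  shows "herm_sd_constacyclic (2 * M) \<kappa> (stack m ` {a. length a = M})"
proof (rule herm_sd_constacyclicI)
  let ?C = "stack m ` {a. length a = M}"
  have mm: "m * m ^ q = -1"
    using mq by (simp add: power_Suc[symmetric] del: power_Suc)
  show "linear_code (2 * M) ?C"
    unfolding linear_code_iff
  proof (intro conjI ballI allI)
    show "replicate (2 * M) 0 \<in> ?C"
      using stack_zero[of m M] by (metis (mono_tags) image_eqI length_replicate mem_Collect_eq)
    show "vadd x y \<in> ?C" if "x \<in> ?C" "y \<in> ?C" for x y
      using that by (auto simp flip: stack_vadd)
    show "vsmult a x \<in> ?C" if "x \<in> ?C" for a x
      using that by (auto simp flip: stack_vsmult)
  qed auto
  show "constashift \<kappa> c \<in> ?C" if "c \<in> ?C" for c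
    using that by (auto simp: constashift_stack[OF mk])
  show "hinner x y = 0" if "x \<in> ?C" "y \<in> ?C" for x y
    using that by (auto simp: herm_inner_stack mm)
  show "v \<in> ?C" if "length v = 2 * M" and v_perp: "\<And>c. c \<in> ?C \<Longrightarrow> hinner v c = 0" for v
  proof -
    define x y where "x = take M v" and "y = drop M v"
    have v: "v = x @ y" and len: "length x = M" "length y = M"
      using \<open>length v = 2 * M\<close> by (auto simp: x_def y_def)
    have "hinner (vadd x (vsmult (m ^ q) y)) b = 0" if "length b = M" for b
      using v_perp[of "stack m b"] that len
      by (simp add: v herm_inner_append_stack herm_inner_vadd_left herm_inner_vsmult_left)
    then have "vadd x (vsmult (m ^ q) y) = replicate M 0"
      using len by (intro herm_inner_nondegenerate) simp_all
    then have "y = vsmult m x"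
    proof (intro nth_equalityI)
      fix i
      assume "vadd x (vsmult (m ^ q) y) = replicate M 0" and "i < length y"
      then have "x ! i + m ^ q * y ! i = 0"
        using len by (metis length_vsmult min.idem nth_replicate nth_vadd nth_vsmult)
      then have "m * x ! i + (m * m ^ q) * y ! i = 0"
        by (metis distrib_left mult.assoc mult_zero_right)
      then show "y ! i = vsmult m x ! i"
        using \<open>i < length y\<close> len by (simp add: mm)
    qed (simp add: len)
    then show ?thesis
      using len by (auto simp: v stack_def)
  qed
qed

lemma herm_sd_constacyclic_glue:
  assumes mk: "m ^ 2 * \<kappa> = 1" and mq: "m ^ (q + 1) = 1"
    and D1: "herm_sd_constacyclic M (inverse m) D1"
    and D2: "herm_sd_constacyclic M (- inverse m) D2"
  shows "herm_sd_constacyclic (2 * M) \<kappa> (glue m D1 D2)"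
proof (rule herm_sd_constacyclicI)
  have lin: "linear_code M D1" "linear_code M D2"
    using D1 D2 by (auto intro: herm_sd_constacyclic_linear_code)
  have len: "\<And>a. a \<in> D1 \<Longrightarrow> length a = M" "\<And>b. b \<in> D2 \<Longrightarrow> length b = M"
    using lin linear_code_length by blast+
  have zero: "replicate M 0 \<in> D1" "replicate M 0 \<in> D2"
    using lin linear_code_zero by blast+
  show "linear_code (2 * M) (glue m D1 D2)"
    using lin by (rule linear_code_glue)
  show "constashift \<kappa> c \<in> glue m D1 D2" if "c \<in> glue m D1 D2" for c
    by (rule constashift_glue[OF mk lin _ _ that])
       (simp_all add: herm_sd_constacyclic_shift[OF D1] herm_sd_constacyclic_shift[OF D2])
  show "hinner x y = 0" if xy: "x \<in> glue m D1 D2" "y \<in> glue m D1 D2" for x y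
  proof -
    obtain a b a' b' where ab: "a \<in> D1" "b \<in> D2" "a' \<in> D1" "b' \<in> D2"
      and "x = vadd (stack m a) (stack (- m) b)" "y = vadd (stack m a') (stack (- m) b')"
      using xy unfolding glue_def by blast
    then show ?thesis
      using len herm_sd_constacyclic_orthogonal[OF D1] herm_sd_constacyclic_orthogonal[OF D2]
      by (simp add: herm_inner_stack_pair[OF mq])
  qed
  show "v \<in> glue m D1 D2"
    if "length v = 2 * M" and v_perp: "\<And>c. c \<in> glue m D1 D2 \<Longrightarrow> hinner v c = 0" for v
  proof -
    have "m \<noteq> 0"
      using mk by auto
    then obtain a b where ab: "length a = M" "length b = M"
      and v: "v = vadd (stack m a) (stack (- m) b)"
      using stack_pair_decomposition two_neq_zero \<open>length v = 2 * M\<close> by blast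
    have "a \<in> D1"
    proof (rule herm_sd_constacyclic_maximal[OF D1 \<open>length a = M\<close>])
      fix d
      assume "d \<in> D1"
      then have "hinner v (vadd (stack m d) (stack (- m) (replicate M 0))) = 0"
        using zero by (intro v_perp) (auto simp: glue_def)
      then show "hinner a d = 0"
        using ab len \<open>d \<in> D1\<close> two_neq_zero by (simp add: v herm_inner_stack_pair[OF mq])
    qed
    moreover have "b \<in> D2"
    proof (rule herm_sd_constacyclic_maximal[OF D2 \<open>length b = M\<close>])
      fix d
      assume "d \<in> D2"
      then have "hinner v (vadd (stack m (replicate M 0)) (stack (- m) d)) = 0"
        using zero by (intro v_perp) (auto simp: glue_def)
      then show "hinner b d = 0"
        using ab len \<open>d \<in> D2\<close> two_neq_zero by (simp add: v herm_inner_stack_pair[OF mq])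
    qed
    ultimately show ?thesis
      by (auto simp: glue_def v)
  qed
qed

lemma no_herm_sd_constacyclic:
  assumes fin: "finite (UNIV :: 'a set)" and \<eta>: "\<eta> ^ (q + 1) = 1" and "odd m"
  shows "\<not> herm_sd_constacyclic (2 ^ d * m) (\<eta> ^ 2 ^ d) C"
proof (induction d arbitrary: C)
  case 0
  show ?case
    using herm_self_dual_length_even[OF fin] \<open>odd m\<close> by (auto simp: herm_sd_constacyclic_def)
next
  case (Suc d)
  define \<mu> where "\<mu> = inverse (\<eta> ^ 2 ^ d)"
  have "\<eta> \<noteq> 0"
    using \<eta> by auto
  then have mk: "\<mu> ^ 2 * \<eta> ^ 2 ^ Suc d = 1"
    by (simp add: \<mu>_def power_inverse power_mult[symmetric] mult.commute)
  have "(\<eta> ^ 2 ^ d) ^ (q + 1) = (\<eta> ^ (q + 1)) ^ 2 ^ d"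
    by (simp only: power_mult[symmetric] mult.commute)
  then have "(\<eta> ^ 2 ^ d) ^ (q + 1) = 1"
    by (simp only: \<eta> power_one)
  then have mq: "\<mu> ^ (q + 1) = 1"
    unfolding \<mu>_def power_inverse by simp
  show ?case
  proof
    assume "herm_sd_constacyclic (2 ^ Suc d * m) (\<eta> ^ 2 ^ Suc d) C"
    then have "herm_sd_constacyclic (2 * (2 ^ d * m)) (\<eta> ^ 2 ^ Suc d) C"
      by (simp add: mult.assoc)
    from herm_sd_constacyclic_halve[OF this mk mq] Suc.IH show False
      by (simp add: \<mu>_def)
  qed
qed

text \<open>The two codes glued at level \<open>d + 1\<close> come from the odd exponents \<open>u\<close> and
  \<open>u + 2 ^ (s - d)\<close> at level \<open>d\<close>.\<close>
lemma ex_herm_sd_constacyclic: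
  assumes \<zeta>: "\<zeta> ^ 2 ^ s = -1" and qs: "q + 1 = 2 ^ s * w" and "odd w"
  shows "1 \<le> d \<Longrightarrow> d \<le> s \<Longrightarrow> odd u \<Longrightarrow> \<exists>C. herm_sd_constacyclic (2 ^ d * M) (\<zeta> ^ (2 ^ d * u)) C"
proof (induction d arbitrary: u rule: nat_induct_at_least)
  case base
  define \<mu> where "\<mu> = inverse (\<zeta> ^ u)"
  have "\<zeta> \<noteq> 0"
    using \<zeta> by (auto simp: power_0_left)
  then have mk: "\<mu> ^ 2 * \<zeta> ^ (2 ^ 1 * u) = 1"
    by (simp add: \<mu>_def power_inverse power_mult[symmetric] mult.commute)
  have "(\<zeta> ^ u) ^ (q + 1) = \<zeta> ^ (2 ^ s * (w * u))"
    by (simp only: power_mult[symmetric] qs mult.assoc mult.commute[of u])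
  also have "\<dots> = -1"
    using \<zeta> \<open>odd w\<close> \<open>odd u\<close> by (simp add: power_mult)
  finally have mq: "\<mu> ^ (q + 1) = -1"
    unfolding \<mu>_def power_inverse by simp
  show ?case
    using herm_sd_constacyclic_stack_all[OF mk mq] by auto
next
  case (Suc d)
  define \<mu> where "\<mu> = inverse (\<zeta> ^ (2 ^ d * u))"
  have "\<zeta> \<noteq> 0"
    using \<zeta> by (auto simp: power_0_left)
  then have mk: "\<mu> ^ 2 * \<zeta> ^ (2 ^ Suc d * u) = 1"
    by (simp add: \<mu>_def power_inverse power_mult[symmetric] mult_ac)
  obtain d' where "d = Suc d'"
    using Suc.hyps by (cases d) auto
  then have "2 ^ d * u * (q + 1) = 2 ^ s * (2 * (2 ^ d' * u * w))"
    unfolding qs by simp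
  then have "(\<zeta> ^ (2 ^ d * u)) ^ (q + 1) = 1"
    using \<zeta> by (simp only: power_mult[symmetric]) (simp add: power_mult)
  then have mq: "\<mu> ^ (q + 1) = 1"
    unfolding \<mu>_def power_inverse by simp
  obtain D1 where D1: "herm_sd_constacyclic (2 ^ d * M) (inverse \<mu>) D1"
    using Suc.IH[of u] Suc.prems by (auto simp: \<mu>_def)
  have "2 ^ d * (u + 2 ^ (s - d)) = 2 ^ d * u + 2 ^ s"
    using Suc.prems by (simp add: distrib_left power_add[symmetric])
  then have "\<zeta> ^ (2 ^ d * (u + 2 ^ (s - d))) = - inverse \<mu>"
    using \<zeta> by (simp add: \<mu>_def power_add)
  moreover have "odd (u + 2 ^ (s - d))"
    using Suc.prems by simp
  ultimately obtain D2 where D2: "herm_sd_constacyclic (2 ^ d * M) (- inverse \<mu>) D2"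
    using Suc.IH[of "u + 2 ^ (s - d)"] Suc.prems by auto
  have "herm_sd_constacyclic (2 * (2 ^ d * M)) (\<zeta> ^ (2 ^ Suc d * u)) (glue \<mu> D1 D2)"
    using herm_sd_constacyclic_glue[OF mk mq D1 D2] .
  then show ?case
    by (auto simp: mult.assoc)
qed

lemma no_herm_sd_negacyclic:
  fixes y :: 'a
  assumes fin: "finite (UNIV :: 'a set)" and y: "y ^ (q + 1) = -1" and "odd m"
    and "2 ^ (\<nu> + 1) dvd q + 1"
  shows "\<not> herm_sd_constacyclic (2 ^ \<nu> * m) (-1) C"
proof -
  obtain w where "q + 1 = 2 ^ (\<nu> + 1) * w"
    using assms(4) ..
  then have w: "q + 1 = 2 * w * 2 ^ \<nu>"
    by simp
  have "(y ^ (2 * w)) ^ 2 ^ \<nu> = -1"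
    using y by (simp only: w power_mult)
  moreover have "(y ^ (2 * w)) ^ (q + 1) = ((y ^ (q + 1)) ^ 2) ^ w"
    by (simp only: power_mult[symmetric] mult_ac)
  then have "(y ^ (2 * w)) ^ (q + 1) = 1"
    using y by simp
  ultimately show ?thesis
    using no_herm_sd_constacyclic[OF fin _ \<open>odd m\<close>, of "y ^ (2 * w)" \<nu> C] by simp
qed

lemma ex_herm_sd_negacyclic:
  fixes y :: 'a
  assumes "odd q" and y: "y ^ (q + 1) = -1" and "0 < \<nu>"
    and not_dvd: "\<not> 2 ^ (\<nu> + 1) dvd q + 1"
  shows "\<exists>C. herm_sd_constacyclic (2 ^ \<nu> * m) (-1) C"
proof -
  define s where "s = multiplicity 2 (q + 1)"
  have mult_prems: "q + 1 \<noteq> 0" "\<not> is_unit (2::nat)"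
    by simp_all
  obtain w where qs: "q + 1 = 2 ^ s * w" and "odd w"
    unfolding s_def by (rule multiplicity_decompose'[OF mult_prems])
  have "1 \<le> s"
    using \<open>odd q\<close> power_dvd_iff_le_multiplicity[OF mult_prems, of 1] by (simp add: s_def)
  have "s \<le> \<nu>"
    using not_dvd power_dvd_iff_le_multiplicity[OF mult_prems, of "\<nu> + 1"] by (simp add: s_def)
  have \<zeta>: "(y ^ w) ^ 2 ^ s = -1"
    using y by (simp only: power_mult[symmetric] qs mult.commute)
  have "\<exists>C. herm_sd_constacyclic (2 ^ s * (2 ^ (\<nu> - s) * m)) ((y ^ w) ^ (2 ^ s * 1)) C"
    by (rule ex_herm_sd_constacyclic[OF \<zeta> qs \<open>odd w\<close>]) (use \<open>1 \<le> s\<close> \<open>s \<le> \<nu>\<close> in simp_all)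
  then obtain C
    where "herm_sd_constacyclic (2 ^ s * (2 ^ (\<nu> - s) * m)) ((y ^ w) ^ (2 ^ s * 1)) C" ..
  moreover obtain k where "\<nu> = s + k"
    using \<open>s \<le> \<nu>\<close> le_Suc_ex by blast
  ultimately have "herm_sd_constacyclic (2 ^ \<nu> * m) (-1) C"
    using \<zeta> by (simp add: power_add mult.assoc)
  then show ?thesis ..
qed

lemma negacyclic_herm_self_dual_iff:
  "negacyclic_code n C \<and> linear_code n C \<and> herm_self_dual q n C \<longleftrightarrow> herm_sd_constacyclic n (-1) C"
  by (auto simp: herm_sd_constacyclic_def negacyclic_code_def negashift_eq_constashift)

end

lemma conj_field_prime_power:
  assumes "prime p" and "odd p" and card: "card (UNIV :: 'a::{finite,field} set) = p ^ (2 * l)"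
  shows "conj_field TYPE('a) (p ^ l)"
proof
  have char: "CHAR('a) = p"
    using CHAR_eq_of_card_eq_prime_power[OF assms(1) card] .
  show "(a + b) ^ p ^ l = a ^ p ^ l + b ^ p ^ l" for a b :: 'a
    using assms(1) by (intro freshmans_dream') (simp_all add: char)
  show "(a ^ p ^ l) ^ p ^ l = a" for a :: 'a
    using power_card_UNIV_eq_same[of a] card by (simp flip: power_mult power_add add: mult_2)
  show "(2::'a) \<noteq> 0"
  proof
    assume "(2::'a) = 0"
    then have "p dvd 2"
      using of_nat_eq_0_iff_char_dvd[where ?'a = 'a, of 2] char by simp
    then have "p \<le> 2"
      by (simp add: dvd_imp_le)
    with assms(1,2) show False
      using prime_ge_2_nat[of p] by (cases "p = 2") auto
  qed
qed

theorem corollary3p14: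
  fixes p \<nu> r n' n l :: nat
  assumes "prime p" and "odd p"
    and "\<nu> > 0" and "odd n'" and "\<not> p dvd n'"
    and "n = 2 ^ \<nu> * p ^ r * n'"
    and "l > 0"
    and "card (UNIV :: 'a set) = p ^ (2 * l)"
  shows "(\<exists>C :: ('a::{finite,field}) list set. negacyclic_code n C \<and> linear_code n C
             \<and> herm_self_dual (p ^ l) n C)
         \<longleftrightarrow> \<not> (2 ^ (\<nu> + 1) dvd p ^ l + 1)"
proof -
  interpret conj_field "p ^ l" "TYPE('a)"
    using conj_field_prime_power assms(1,2,8) .
  have "card (UNIV :: 'a set) = (p ^ l) ^ 2" and "odd (p ^ l)"
    using assms(2,8) by (simp_all flip: power_mult add: mult.commute)
  then obtain y :: 'a where y: "y ^ (p ^ l + 1) = -1"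
    using ex_power_Suc_eq_minus_one by blast
  have n: "n = 2 ^ \<nu> * (p ^ r * n')" and "odd (p ^ r * n')"
    using assms(2,4,6) by (simp_all add: mult.assoc)
  have "(\<exists>C. herm_sd_constacyclic n (-1) C) \<longleftrightarrow> \<not> 2 ^ (\<nu> + 1) dvd p ^ l + 1"
    unfolding n using no_herm_sd_negacyclic[OF finite_UNIV y \<open>odd (p ^ r * n')\<close>]
      ex_herm_sd_negacyclic[OF \<open>odd (p ^ l)\<close> y assms(3)] by blast
  then show ?thesis
    by (simp only: negacyclic_herm_self_dual_iff)
qed

end
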